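(* Let $\theta\in[0,1]$, and define the stability function and its inverse by $$\mathcal{R}_{\theta}(z)=\frac{1+(1-\theta)z}{1-\theta z},\qquad \mathcal{R}_{\theta}^{-1}(w)=\frac{1-w}{\theta(1-w)-1}.$$ Let $\sigma:\mathbb{R}\to\mathbb{R}$ be a differentiable activation function with $|\sigma|:=\sup_{t}|\sigma'(t)|\in(0,\infty)$. For weight matrices $\gamma_1,\dots,\gamma_n$ (nonzero, of compatible sizes, with $\gamma_1$ having $d$ columns and $\gamma_n$ having $d$ rows) and bias vectors $b_1,\dots,b_n$, set $\tilde{\gamma}_i=\gamma_i/(|\sigma|\,\|\gamma_i\|)$ where $\|\cdot\|$ is the spectral norm, and define the spectrally normalized network $\tilde F(\gamma,x)=\phi_n\circ\cdots\circ\phi_1(x)$ on $\mathbb{R}^d$, where $\phi_i(x)=\sigma(\tilde{\gamma}_i x+b_i)$ with $\sigma$ applied elementwise. Let $S(t)=1/(1+e^{-t})$ be the sigmoid function, let $\gamma_c,\gamma_L\in\mathbb{R}$ be arbitrary scalar parameters, and set $$c:=\mathcal{R}_{\theta}^{-1}\big(1-S(\gamma_c)\big),\qquad r:=\max\Big(0,\ \mathcal{R}_{\theta}^{-1}\big(1-S(\gamma_L)\big)-c\Big),$$ $$F(\gamma,x):=c\,x+r\,\tilde F(\gamma,x).$$ Then the residual layer $y=x+F(\gamma,(1-\theta)x+\theta y)$ is dissipative, i.e., for every $x\in\mathbb{R}^d$, every eigenvalue $\lambda$ of the Jacobian $D_xF(\gamma,x)$ satisfies $|\mathcal{R}_{\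theta}(\lambda)|<1$.
   Context: An implicit residual layer with vector field $F(\gamma,\cdot):\mathbb{R}^d\to\mathbb{R}^d$ and parameter $\theta$ maps $x$ to $y$ defined by $y=x+F(\gamma,(1-\theta)x+\theta y)$. Its stability function is $\mathcal{R}_{\theta}(z)=\frac{1+(1-\theta)z}{1-\theta z}$ for $z\in\mathbb{C}$, and its stability region is the set $\{z\in\mathbb{C}:|\mathcal{R}_{\theta}(z)|<1\}$. The layer is called dissipative if, at every point $x$, all eigenvalues of the Jacobian $D_xF(\gamma,x)$ lie in the stability region. *)

theory Defs
  imports "HOL-Analysis.Analysis"
begin

definition stab :: "real \<Rightarrow> complex \<Rightarrow> complex" where
  "stab \<theta> z = (1 + complex_of_real (1 - \<theta>) * z) / (1 - complex_of_real \<theta> * z)"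

definition stab_inv :: "real \<Rightarrow> real \<Rightarrow> real" where
  "stab_inv \<theta> w = (1 - w) / (\<theta> * (1 - w) - 1)"

definition sigmoid :: "real \<Rightarrow> real" where
  "sigmoid t = 1 / (1 + exp (- t))"

text \<open>Finite-dimensional vectors of varying dimension are represented as
  functions nat => real (only the first k entries matter); a m x k matrix as
  nat => nat => real (entries (i,j) with i<m, j<k).\<close>

definition vnorm :: "nat \<Rightarrow> (nat \<Rightarrow> real) \<Rightarrow> real" where
  "vnorm k v = sqrt (\<Sum>j<k. (v j)^2)"

definition matvec :: "nat \<Rightarrow> nat \<Rightarrow> (nat \<Rightarrow> nat \<Rightarrow> real) \<Rightarrow> (nat \<Rightarrow> real) \<Rightarrow> (nat \<Rightarrow> real)" where
  "matvec m k G v = (\<lambda>i. if i < m then (\<Sum>j<k. G i j * v j) else 0)"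

definition spec_norm :: "nat \<Rightarrow> nat \<Rightarrow> (nat \<Rightarrow> nat \<Rightarrow> real) \<Rightarrow> real" where
  "spec_norm m k G = Sup {vnorm m (matvec m k G v) | v. vnorm k v \<le> 1}"

definition nonzero_mat :: "nat \<Rightarrow> nat \<Rightarrow> (nat \<Rightarrow> nat \<Rightarrow> real) \<Rightarrow> bool" where
  "nonzero_mat m k G \<longleftrightarrow> (\<exists>i<m. \<exists>j<k. G i j \<noteq> 0)"

text \<open>A layer is (m, k, G, b): G is an m x k weight matrix, b a bias vector of length m.
  Spectrally normalised layer: x |-> sigma(G x / (|sigma| ||G||) + b), elementwise.\<close>
type_synonym layer = "nat \<times> nat \<times> (nat \<Rightarrow> nat \<Rightarrow> real) \<times> (nat \<Rightarrow> real)"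

definition sn_layer :: "(real \<Rightarrow> real) \<Rightarrow> real \<Rightarrow> layer \<Rightarrow> (nat \<Rightarrow> real) \<Rightarrow> (nat \<Rightarrow> real)" where
  "sn_layer \<sigma> s L v = (case L of (m, k, G, b) \<Rightarrow>
     (\<lambda>i. if i < m then \<sigma> ((\<Sum>j<k. (G i j / (s * spec_norm m k G)) * v j) + b i) else 0))"

fun net_apply :: "(real \<Rightarrow> real) \<Rightarrow> real \<Rightarrow> layer list \<Rightarrow> (nat \<Rightarrow> real) \<Rightarrow> (nat \<Rightarrow> real)" where
  "net_apply \<sigma> s [] v = v"
| "net_apply \<sigma> s (L # Ls) v = net_apply \<sigma> s Ls (sn_layer \<sigma> s L v)"

definition wf_net :: "nat \<Rightarrow> layer list \<Rightarrow> bool" where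
  "wf_net d Ls \<longleftrightarrow> Ls \<noteq> [] \<and>
     fst (snd (hd Ls)) = d \<and> fst (last Ls) = d \<and>
     (\<forall>i. Suc i < length Ls \<longrightarrow> fst (snd (Ls ! Suc i)) = fst (Ls ! i)) \<and>
     (\<forall>L\<in>set Ls. case L of (m, k, G, b) \<Rightarrow> nonzero_mat m k G)"

definition coord :: "nat \<Rightarrow> 'd::finite" where
  "coord = (SOME f. bij_betw f {..<CARD('d)} (UNIV :: 'd set))"

definition to_fun :: "real ^ 'd::finite \<Rightarrow> (nat \<Rightarrow> real)" where
  "to_fun x = (\<lambda>i. if i < CARD('d) then x $ coord i else 0)"

definition of_fun :: "(nat \<Rightarrow> real) \<Rightarrow> real ^ 'd::finite" where
  "of_fun v = (\<chi> j. v (inv_into {..<CARD('d)} coord j))"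

definition Ftilde :: "(real \<Rightarrow> real) \<Rightarrow> real \<Rightarrow> layer list \<Rightarrow> real ^ 'd::finite \<Rightarrow> real ^ 'd" where
  "Ftilde \<sigma> s Ls x = of_fun (net_apply \<sigma> s Ls (to_fun x))"

definition is_eigenvalue :: "real ^ 'n ^ 'n \<Rightarrow> complex \<Rightarrow> bool" where
  "is_eigenvalue A mu \<longleftrightarrow>
     (\<exists>v :: complex ^ 'n. v \<noteq> 0 \<and> (\<chi> i j. complex_of_real (A $ i $ j)) *v v = mu *s v)"

end

theory Submission
  imports Defs
begin

text \<open>
  Since \<sigma> is |\<sigma>|-Lipschitz and every normalised weight matrix has spectral norm 1/|\<sigma>|,
  each layer, and hence the network F~, is 1-Lipschitz; so its derivative has operator norm
  at most 1, and every eigenvalue of D F = c I + r D F~ lies in the closed disk of centre c and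
  radius r. Because |1 + (1 - \<theta>) z|^2 - |1 - \<theta> z|^2 = 2 Re z + (1 - 2\<theta>) |z|^2, the stability
  region is {2 Re z + (1 - 2\<theta>) |z|^2 < 0}: a disk centred on the negative real axis for
  \<theta> < 1/2, and a set containing the open left half-plane for \<theta> \<ge> 1/2. Either way a disk
  centred on the real axis lies in it as soon as the two real ends c - r and c + r of the disk
  are negative points of it. For the chosen c and r they are, since the values
  w of the inverse stability function on (0, 1) satisfy w < 0 and (1 - 2\<theta>) w > -1.
\<close>

section \<open>The stability region\<close>

lemma norm_stab_less_one:
  assumes "2 * Re z + (1 - 2 * \<theta>) * (cmod z)\<^sup>2 < 0"
  shows "cmod (stab \<theta> z) < 1"
proof (cases "1 - complex_of_real \<theta> * z = 0")
  case True
  then show ?thesis by (simp add: stab_def)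
next
  case False
  have "(cmod (1 + complex_of_real (1 - \<theta>) * z))\<^sup>2 < (cmod (1 - complex_of_real \<theta> * z))\<^sup>2"
    using assms unfolding cmod_power2 by (simp add: algebra_simps power2_eq_square)
  then have "cmod (1 + complex_of_real (1 - \<theta>) * z) < cmod (1 - complex_of_real \<theta> * z)"
    by (rule power2_less_imp_less) simp
  with False show ?thesis by (simp add: stab_def norm_divide divide_less_eq)
qed

lemma disk_in_stability_region:
  fixes \<kappa> c r :: real
  assumes z: "cmod (z - of_real c) \<le> r" and "c + r < 0"
    and left: "2 * (c - r) + \<kappa> * (c - r)\<^sup>2 < 0" and right: "2 * (c + r) + \<kappa> * (c + r)\<^sup>2 < 0"
  shows "2 * Re z + \<kappa> * (cmod z)\<^sup>2 < 0"
proof -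
  define x where "x = Re z"
  have "0 \<le> r" using z norm_ge_zero order_trans by blast
  have disk: "(x - c)\<^sup>2 + (Im z)\<^sup>2 \<le> r\<^sup>2"
  proof -
    have "(cmod (z - of_real c))\<^sup>2 \<le> r\<^sup>2" by (rule power_mono[OF z norm_ge_zero])
    then show ?thesis by (simp add: cmod_power2 x_def)
  qed
  then have "(x - c)\<^sup>2 \<le> r\<^sup>2" using zero_le_power2[of "Im z"] by linarith
  then have "\<bar>x - c\<bar> \<le> r" using abs_le_square_iff[of "x - c" r] \<open>0 \<le> r\<close> by simp
  then have x: "c - r \<le> x" "x \<le> c + r" by auto
  have norm_z: "(cmod z)\<^sup>2 = x\<^sup>2 + (Im z)\<^sup>2" by (simp add: cmod_power2 x_def)
  show ?thesis
  proof (cases "\<kappa> \<ge> 0")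
    case True
    \<comment> \<open>An affine bound in x that is exact at x = c - r and x = c + r, so the endpoints decide.\<close>
    have "(cmod z)\<^sup>2 \<le> 2 * c * x + r\<^sup>2 - c\<^sup>2"
      using disk unfolding norm_z by (simp add: power2_eq_square algebra_simps)
    then have "\<kappa> * (cmod z)\<^sup>2 \<le> \<kappa> * (2 * c * x + r\<^sup>2 - c\<^sup>2)"
      using True by (rule mult_left_mono)
    then have "2 * x + \<kappa> * (cmod z)\<^sup>2 \<le> (2 + 2 * \<kappa> * c) * x + \<kappa> * (r\<^sup>2 - c\<^sup>2)"
      by (simp add: algebra_simps)
    also have "\<dots> < 0"
    proof (cases "2 + 2 * \<kappa> * c \<ge> 0")
      case True
      then have "(2 + 2 * \<kappa> * c) * x \<le> (2 + 2 * \<kappa> * c) * (c + r)" using x by (intro mult_left_mono) auto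
      moreover have "(2 + 2 * \<kappa> * c) * (c + r) + \<kappa> * (r\<^sup>2 - c\<^sup>2) = 2 * (c + r) + \<kappa> * (c + r)\<^sup>2"
        by (simp add: power2_eq_square algebra_simps)
      ultimately show ?thesis using right by linarith
    next
      case False
      then have "(2 + 2 * \<kappa> * c) * x \<le> (2 + 2 * \<kappa> * c) * (c - r)" using x by (intro mult_left_mono_neg) auto
      moreover have "(2 + 2 * \<kappa> * c) * (c - r) + \<kappa> * (r\<^sup>2 - c\<^sup>2) = 2 * (c - r) + \<kappa> * (c - r)\<^sup>2"
        by (simp add: power2_eq_square algebra_simps)
      ultimately show ?thesis using left by linarith
    qed
    finally show ?thesis unfolding x_def .
  next
    case False
    then have "\<kappa> * (cmod z)\<^sup>2 \<le> 0" by (simp add: mult_nonpos_nonneg)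
    with x \<open>c + r < 0\<close> show ?thesis by (simp add: x_def)
  qed
qed

lemma real_in_stability_region:
  fixes \<kappa> x :: real
  assumes "x < 0" and "-2 < \<kappa> * x"
  shows "2 * x + \<kappa> * x\<^sup>2 < 0"
proof -
  have "x * (2 + \<kappa> * x) < 0" using assms by (intro mult_neg_pos) auto
  then show ?thesis by (simp add: algebra_simps power2_eq_square)
qed

lemma diameter_in_stability_region:
  fixes \<kappa> c a :: real
  assumes c: "c < 0" "-1 < \<kappa> * c" and a: "a < 0" "-1 < \<kappa> * a"
  defines "r \<equiv> max 0 (a - c)"
  shows "c + r < 0" and "2 * (c - r) + \<kappa> * (c - r)\<^sup>2 < 0" and "2 * (c + r) + \<kappa> * (c + r)\<^sup>2 < 0"
proof -
  have "c + r = max c a" by (simp add: r_def max_def)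
  then show "c + r < 0" and "2 * (c + r) + \<kappa> * (c + r)\<^sup>2 < 0"
    using c a by (auto intro: real_in_stability_region simp: max_def)
  show "2 * (c - r) + \<kappa> * (c - r)\<^sup>2 < 0"
  proof (cases "a \<le> c")
    case True
    then show ?thesis using c by (simp add: r_def real_in_stability_region)
  next
    case False
    then have "c - r = 2 * c - a" and "2 * c - a < 0" using c by (auto simp: r_def)
    \<comment> \<open>The reflected end 2c - a is where the margin -1, rather than -2, is needed.\<close>
    moreover have "-2 < \<kappa> * (2 * c - a)"
    proof (cases "0 \<le> \<kappa>")
      case True
      then have "\<kappa> * a \<le> 0" using a by (simp add: mult_nonneg_nonpos)
      then show ?thesis using c by (simp add: algebra_simps)
    next
      case False
      then have "0 < \<kappa> * (2 * c - a)" using \<open>2 * c - a < 0\<close> by (intro mult_neg_neg) auto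
      then show ?thesis by linarith
    qed
    ultimately show ?thesis by (metis real_in_stability_region)
  qed
qed

lemma sigmoid_pos: "0 < sigmoid t"
  by (simp add: sigmoid_def add_pos_pos)

lemma sigmoid_less_one: "sigmoid t < 1"
proof -
  have "0 < 1 + exp (- t)" by (intro add_pos_pos) auto
  then show ?thesis unfolding sigmoid_def by (simp add: divide_less_eq_1_pos)
qed

lemma stab_inv_bounds:
  assumes "0 \<le> \<theta>" "\<theta> \<le> 1" "0 < u" "u < 1"
  shows "stab_inv \<theta> (1 - u) < 0" and "-1 < (1 - 2 * \<theta>) * stab_inv \<theta> (1 - u)"
proof -
  have "\<theta> * u \<le> u" using assms by (simp add: mult_left_le_one_le)
  then have den: "0 < 1 - \<theta> * u" using assms by linarith
  have eq: "stab_inv \<theta> (1 - u) = - u / (1 - \<theta> * u)"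
    by (simp add: stab_inv_def minus_divide_right)
  show "stab_inv \<theta> (1 - u) < 0" unfolding eq using den assms by simp
  have "0 \<le> \<theta> * u" using assms by simp
  moreover have "(1 - 2 * \<theta>) * - u + (1 - \<theta> * u) = 1 - u + \<theta> * u" by (simp add: algebra_simps)
  ultimately have "-(1 - \<theta> * u) < (1 - 2 * \<theta>) * - u" using assms by linarith
  then show "-1 < (1 - 2 * \<theta>) * stab_inv \<theta> (1 - u)"
    unfolding eq using den by (simp add: less_divide_eq)
qed

section \<open>Eigenvalues of real matrices\<close>

lemma norm_vec_power2: "(norm (x :: 'a::real_normed_vector ^ 'n))\<^sup>2 = (\<Sum>i\<in>UNIV. (norm (x $ i))\<^sup>2)"
  by (simp add: norm_vec_def L2_set_def sum_nonneg)

lemma norm_map_matrix_of_real_mult_le: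
  fixes A :: "real ^ 'n ^ 'm" and v :: "complex ^ 'n"
  assumes K: "0 \<le> K" and bound: "\<And>x. norm (A *v x) \<le> K * norm x"
  shows "norm (map_matrix complex_of_real A *v v) \<le> K * norm v"
proof -
  define a b where "a = (\<chi> i. Re (v $ i))" and "b = (\<chi> i. Im (v $ i))"
  have nth: "(map_matrix complex_of_real A *v v) $ i = Complex ((A *v a) $ i) ((A *v b) $ i)" for i
    by (simp add: matrix_vector_mult_def a_def b_def complex_eq_iff Re_sum Im_sum)
  have "(norm (map_matrix complex_of_real A *v v))\<^sup>2 = (norm (A *v a))\<^sup>2 + (norm (A *v b))\<^sup>2"
    unfolding norm_vec_power2 nth by (simp add: cmod_power2 sum.distrib)
  also have "\<dots> \<le> (K * norm a)\<^sup>2 + (K * norm b)\<^sup>2"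
    using bound by (intro add_mono power_mono) auto
  also have "\<dots> = (K * norm v)\<^sup>2"
    by (simp add: power_mult_distrib norm_vec_power2 cmod_power2 a_def b_def sum.distrib
        flip: distrib_left)
  finally show ?thesis using K by (rule power2_le_imp_le[OF _ mult_nonneg_nonneg]) simp
qed

lemma norm_vector_scalar_mult:
  "norm (k *s v) = norm k * norm (v :: 'a::real_normed_div_algebra ^ 'n)"
proof (rule power2_eq_imp_eq)
  show "(norm (k *s v))\<^sup>2 = (norm k * norm v)\<^sup>2"
    unfolding power_mult_distrib norm_vec_power2 by (simp add: norm_mult power_mult_distrib sum_distrib_left)
qed simp_all

lemma mat_matrix_vector_mult: "mat k *v x = k *s (x :: 'a::semiring_1 ^ 'n)"
  by (simp add: vec_eq_iff matrix_vector_mult_def mat_def if_distrib[of "\<lambda>y. y * _"] cong: if_cong)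

lemma is_eigenvalue_dist_le:
  fixes A :: "real ^ 'n ^ 'n"
  assumes "is_eigenvalue A \<mu>" and bound: "\<And>x. norm (A *v x - c *\<^sub>R x) \<le> K * norm x"
  shows "cmod (\<mu> - of_real c) \<le> K"
proof -
  obtain v where "v \<noteq> 0" and v: "map_matrix complex_of_real A *v v = \<mu> *s v"
    using assms(1) by (auto simp: is_eigenvalue_def map_matrix_def)
  define B where "B = A - mat c"
  have "0 \<le> K * norm (axis undefined 1 :: real ^ 'n)" using bound norm_ge_zero order_trans by blast
  then have "0 \<le> K" by (simp add: norm_axis_1)
  moreover have "B *v x = A *v x - c *\<^sub>R x" for x
    by (simp add: B_def matrix_vector_mult_diff_rdistrib mat_matrix_vector_mult scalar_mult_eq_scaleR)
  ultimately have "norm (map_matrix complex_of_real B *v v) \<le> K * norm v"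
    using bound by (intro norm_map_matrix_of_real_mult_le) auto
  moreover have "map_matrix complex_of_real B = map_matrix complex_of_real A - mat (of_real c)"
    by (simp add: B_def vec_eq_iff mat_def)
  then have "map_matrix complex_of_real B *v v = (\<mu> - of_real c) *s v"
    using v by (simp add: matrix_vector_mult_diff_rdistrib mat_matrix_vector_mult vector_sub_rdistrib)
  moreover have "norm ((\<mu> - of_real c) *s v) = cmod (\<mu> - of_real c) * norm v"
    by (rule norm_vector_scalar_mult)
  ultimately show ?thesis using \<open>v \<noteq> 0\<close> by simp
qed

section \<open>Lipschitz maps and their derivatives\<close>

lemma lipschitz_on_has_derivative_norm_le:
  fixes f :: "'a::real_normed_vector \<Rightarrow> 'b::real_normed_vector"
  assumes lip: "L-lipschitz_on S f" and "open S" "x \<in> S" and D: "(f has_derivative D) (at x)"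
  shows "norm (D h) \<le> L * norm h"
proof (cases "h = 0")
  case True
  with D show ?thesis by (simp add: has_derivative_at_alt linear_simps)
next
  case False
  have approx: "norm (D h) \<le> L * norm h + e * norm h" if "e > 0" for e
  proof -
    obtain d where "d > 0" and d: "\<And>y. norm (y - x) < d \<Longrightarrow> norm (f y - f x - D (y - x)) \<le> e * norm (y - x)"
      using D \<open>e > 0\<close> unfolding has_derivative_at_alt by blast
    obtain d' where "d' > 0" and "ball x d' \<subseteq> S" using \<open>open S\<close> \<open>x \<in> S\<close> open_contains_ball by blast
    define t where "t = min d d' / (2 * norm h)"
    have "t > 0" using \<open>d > 0\<close> \<open>d' > 0\<close> False by (simp add: t_def)
    have "norm (t *\<^sub>R h) = min d d' / 2" using False \<open>d > 0\<close> \<open>d' > 0\<close> by (simp add: t_def)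
    moreover have "0 < min d d'" using \<open>d > 0\<close> \<open>d' > 0\<close> by simp
    ultimately have step: "norm (t *\<^sub>R h) < min d d'" by linarith
    then have "x + t *\<^sub>R h \<in> S" using \<open>ball x d' \<subseteq> S\<close> by (auto simp: dist_norm)
    have "t * norm (D h) = norm (D (t *\<^sub>R h))"
      using D \<open>t > 0\<close> by (simp add: has_derivative_at_alt linear_simps)
    also have "\<dots> \<le> norm (f (x + t *\<^sub>R h) - f x) + norm (f (x + t *\<^sub>R h) - f x - D (t *\<^sub>R h))"
      using norm_triangle_sub[of "D (t *\<^sub>R h)" "f (x + t *\<^sub>R h) - f x"] by (simp add: norm_minus_commute)
    also have "\<dots> \<le> L * norm (t *\<^sub>R h) + e * norm (t *\<^sub>R h)"
      using lipschitz_on_normD[OF lip \<open>x + t *\<^sub>R h \<in> S\<close> \<open>x \<in> S\<close>] d[of "x + t *\<^sub>R h"] step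
      by (intro add_mono) auto
    finally have "t * norm (D h) \<le> t * (L * norm h + e * norm h)"
      using \<open>t > 0\<close> by (simp add: algebra_simps)
    with \<open>t > 0\<close> show ?thesis by (simp add: mult_le_cancel_left_pos)
  qed
  show ?thesis
  proof (rule field_le_epsilon)
    fix e :: real
    assume "0 < e"
    then show "norm (D h) \<le> L * norm h + e"
      using approx[of "e / norm h"] False by simp
  qed
qed

lemma is_eigenvalue_derivative_dist_le:
  fixes G :: "real ^ 'n \<Rightarrow> real ^ 'n"
  assumes lip: "L-lipschitz_on UNIV G" and "G differentiable (at x)" and "0 \<le> r"
    and F': "((\<lambda>x. c *\<^sub>R x + r *\<^sub>R G x) has_derivative F') (at x)" and "is_eigenvalue (matrix F') \<mu>"
  shows "cmod (\<mu> - of_real c) \<le> r * L"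
proof (rule is_eigenvalue_dist_le[OF \<open>is_eigenvalue (matrix F') \<mu>\<close>])
  obtain D where D: "(G has_derivative D) (at x)"
    using \<open>G differentiable (at x)\<close> unfolding differentiable_def by blast
  then have "((\<lambda>x. c *\<^sub>R x + r *\<^sub>R G x) has_derivative (\<lambda>h. c *\<^sub>R h + r *\<^sub>R D h)) (at x)"
    by (intro derivative_intros)
  then have F'_eq: "F' = (\<lambda>h. c *\<^sub>R h + r *\<^sub>R D h)" by (rule has_derivative_unique[OF F'])
  fix h
  have "matrix F' *v h = F' h"
    using has_derivative_linear[OF F'] by (simp add: matrix_works linear_matrix_vector_mul_eq)
  then have "norm (matrix F' *v h - c *\<^sub>R h) = r * norm (D h)"
    using \<open>0 \<le> r\<close> by (simp add: F'_eq)
  also have "\<dots> \<le> r * (L * norm h)"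
    using lipschitz_on_has_derivative_norm_le[OF lip open_UNIV UNIV_I D] \<open>0 \<le> r\<close> by (rule mult_left_mono)
  finally show "norm (matrix F' *v h - c *\<^sub>R h) \<le> r * L * norm h" by (simp add: mult.assoc)
qed

lemma lipschitz_on_SUP_abs_deriv:
  fixes f :: "real \<Rightarrow> real"
  assumes "\<forall>t. f differentiable (at t)" and "bdd_above (range (\<lambda>t. \<bar>deriv f t\<bar>))"
  shows "(SUP t. \<bar>deriv f t\<bar>)-lipschitz_on UNIV f"
proof (rule lipschitz_onI)
  have bound: "\<bar>deriv f t\<bar> \<le> (SUP t. \<bar>deriv f t\<bar>)" for t
    using assms(2) by (intro cSUP_upper) auto
  then show "0 \<le> (SUP t. \<bar>deriv f t\<bar>)" using abs_ge_zero order_trans by blast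
  have "(f has_field_derivative deriv f t) (at t)" for t
    using assms(1) by (simp add: DERIV_deriv_iff_real_differentiable)
  with bound show "dist (f x) (f y) \<le> (SUP t. \<bar>deriv f t\<bar>) * dist x y" for x y
    using field_differentiable_bound[of UNIV f "deriv f"] by (simp add: dist_norm)
qed

section \<open>Spectrally normalised networks\<close>

lemma vnorm_nonneg: "0 \<le> vnorm k v"
  by (simp add: vnorm_def sum_nonneg)

lemma vnorm_eq_0_nth: "vnorm k v = 0 \<Longrightarrow> j < k \<Longrightarrow> v j = 0"
  by (simp add: vnorm_def sum_nonneg_eq_0_iff)

lemma vnorm_divide: "vnorm k (\<lambda>j. v j / a) = vnorm k v / \<bar>a\<bar>"
  by (simp add: vnorm_def power_divide real_sqrt_divide flip: sum_divide_distrib)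

lemma vnorm_mono: "(\<And>j. j < k \<Longrightarrow> \<bar>u j\<bar> \<le> \<bar>v j\<bar>) \<Longrightarrow> vnorm k u \<le> vnorm k v"
  unfolding vnorm_def by (intro real_sqrt_le_mono sum_mono) (simp add: abs_le_square_iff)

lemma matvec_divide: "matvec m k G (\<lambda>j. v j / a) = (\<lambda>i. matvec m k G v i / a)"
  by (simp add: matvec_def fun_eq_iff sum_divide_distrib)

lemma vnorm_matvec_le_frobenius:
  "vnorm m (matvec m k G v) \<le> sqrt (\<Sum>i<m. \<Sum>j<k. (G i j)\<^sup>2) * vnorm k v"
proof -
  have "(\<Sum>i<m. (matvec m k G v i)\<^sup>2) \<le> (\<Sum>i<m. (\<Sum>j<k. (G i j)\<^sup>2) * (\<Sum>j<k. (v j)\<^sup>2))"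
    by (intro sum_mono) (simp add: matvec_def Cauchy_Schwarz_ineq_sum)
  then show ?thesis
    by (simp add: vnorm_def real_sqrt_le_mono flip: real_sqrt_mult sum_distrib_right)
qed

lemma bdd_above_spec_norm_set: "bdd_above {vnorm m (matvec m k G v) | v. vnorm k v \<le> 1}"
proof (rule bdd_aboveI[of _ "sqrt (\<Sum>i<m. \<Sum>j<k. (G i j)\<^sup>2)"], safe)
  fix v :: "nat \<Rightarrow> real"
  assume "vnorm k v \<le> 1"
  then have "sqrt (\<Sum>i<m. \<Sum>j<k. (G i j)\<^sup>2) * vnorm k v \<le> sqrt (\<Sum>i<m. \<Sum>j<k. (G i j)\<^sup>2)"
    by (simp add: mult_left_le sum_nonneg)
  with vnorm_matvec_le_frobenius
  show "vnorm m (matvec m k G v) \<le> sqrt (\<Sum>i<m. \<Sum>j<k. (G i j)\<^sup>2)" by (rule order_trans)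
qed

lemma vnorm_matvec_le_spec_norm: "vnorm m (matvec m k G v) \<le> spec_norm m k G * vnorm k v"
proof (cases "vnorm k v = 0")
  case True
  then have "matvec m k G v = (\<lambda>i. 0)" by (auto simp: matvec_def vnorm_eq_0_nth)
  with True show ?thesis by (simp add: vnorm_def)
next
  case False
  then have pos: "0 < vnorm k v" using vnorm_nonneg[of k v] by linarith
  then have "vnorm k (\<lambda>j. v j / vnorm k v) = 1" by (simp add: vnorm_divide)
  then have "vnorm m (matvec m k G (\<lambda>j. v j / vnorm k v)) \<le> spec_norm m k G"
    unfolding spec_norm_def by (intro cSup_upper bdd_above_spec_norm_set) auto
  with pos show ?thesis by (simp add: matvec_divide vnorm_divide divide_le_eq mult.commute)
qed

lemma spec_norm_pos:
  assumes "nonzero_mat m k G"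
  shows "0 < spec_norm m k G"
proof -
  obtain i j where ij: "i < m" "j < k" "G i j \<noteq> 0" using assms unfolding nonzero_mat_def by auto
  define e where "e = (\<lambda>l. if l = j then 1 else 0 :: real)"
  have "vnorm k e = 1" using ij(2) by (simp add: vnorm_def e_def if_distrib[of "\<lambda>x. x\<^sup>2"] cong: if_cong)
  have "matvec m k G e i = G i j" using ij by (simp add: matvec_def e_def if_distrib[of "\<lambda>x. _ * x"] cong: if_cong)
  then have "\<bar>G i j\<bar> \<le> vnorm m (matvec m k G e)"
    using ij(1) by (metis real_sqrt_abs vnorm_def real_sqrt_le_mono member_le_sum lessThan_iff finite_lessThan zero_le_power2)
  also have "\<dots> \<le> spec_norm m k G"
    unfolding spec_norm_def using \<open>vnorm k e = 1\<close> by (intro cSup_upper bdd_above_spec_norm_set) auto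
  finally show ?thesis using ij(3) by simp
qed

lemma sn_layer_lipschitz:
  assumes lip: "s-lipschitz_on UNIV \<sigma>" and "0 < s" and "nonzero_mat m k G"
  shows "vnorm m (sn_layer \<sigma> s (m, k, G, b) v - sn_layer \<sigma> s (m, k, G, b) w) \<le> vnorm k (v - w)"
proof -
  define N where "N = spec_norm m k G"
  have "0 < N" using spec_norm_pos[OF \<open>nonzero_mat m k G\<close>] by (simp add: N_def)
  have "\<bar>sn_layer \<sigma> s (m, k, G, b) v i - sn_layer \<sigma> s (m, k, G, b) w i\<bar> \<le> \<bar>matvec m k G (v - w) i / N\<bar>"
    if "i < m" for i
  proof -
    let ?z = "\<lambda>u. (\<Sum>j<k. G i j / (s * N) * u j) + b i"
    have "?z v - ?z w = matvec m k G (v - w) i / (s * N)"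
      using \<open>i < m\<close> by (simp add: matvec_def sum_divide_distrib diff_divide_distrib algebra_simps flip: sum_subtractf)
    moreover have "\<bar>\<sigma> (?z v) - \<sigma> (?z w)\<bar> \<le> s * \<bar>?z v - ?z w\<bar>"
      using lipschitz_on_normD[OF lip, of "?z v" "?z w"] by simp
    ultimately show ?thesis
      using \<open>i < m\<close> \<open>0 < s\<close> \<open>0 < N\<close> by (simp add: sn_layer_def N_def abs_divide abs_mult)
  qed
  then have "vnorm m (sn_layer \<sigma> s (m, k, G, b) v - sn_layer \<sigma> s (m, k, G, b) w)
      \<le> vnorm m (\<lambda>i. matvec m k G (v - w) i / N)"
    by (intro vnorm_mono) simp
  also have "\<dots> \<le> vnorm k (v - w)"
    using vnorm_matvec_le_spec_norm[of m k G "v - w"] \<open>0 < N\<close>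
    by (simp add: vnorm_divide N_def divide_le_eq mult.commute)
  finally show ?thesis .
qed

lemma net_apply_lipschitz:
  assumes lip: "s-lipschitz_on UNIV \<sigma>" and "0 < s"
  shows "Ls \<noteq> [] \<Longrightarrow> (\<forall>i. Suc i < length Ls \<longrightarrow> fst (snd (Ls ! Suc i)) = fst (Ls ! i)) \<Longrightarrow>
    (\<forall>(m, k, G, b) \<in> set Ls. nonzero_mat m k G) \<Longrightarrow>
    vnorm (fst (last Ls)) (net_apply \<sigma> s Ls v - net_apply \<sigma> s Ls w) \<le> vnorm (fst (snd (hd Ls))) (v - w)"
proof (induction Ls arbitrary: v w)
  case Nil
  then show ?case by simp
next
  case (Cons L Ls)
  obtain m k G b where L: "L = (m, k, G, b)" by (cases L)
  have "nonzero_mat m k G" using Cons.prems(3) L by auto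
  show ?case
  proof (cases "Ls = []")
    case True
    then show ?thesis using sn_layer_lipschitz[OF lip \<open>0 < s\<close> \<open>nonzero_mat m k G\<close>] L
      by (simp add: fun_diff_def)
  next
    case False
    have chain: "\<forall>i. Suc i < length Ls \<longrightarrow> fst (snd (Ls ! Suc i)) = fst (Ls ! i)"
      using Cons.prems(2) by auto
    have "fst (snd (hd Ls)) = m"
      using Cons.prems(2)[rule_format, of 0] False L by (simp add: hd_conv_nth)
    then have "vnorm (fst (last Ls)) (net_apply \<sigma> s Ls (sn_layer \<sigma> s L v) - net_apply \<sigma> s Ls (sn_layer \<sigma> s L w))
        \<le> vnorm m (sn_layer \<sigma> s L v - sn_layer \<sigma> s L w)"
      using Cons.IH[OF False chain] Cons.prems(3) by (simp add: fun_diff_def)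
    also have "\<dots> \<le> vnorm k (v - w)"
      unfolding L by (rule sn_layer_lipschitz[OF lip \<open>0 < s\<close> \<open>nonzero_mat m k G\<close>])
    finally show ?thesis using False L by (simp add: fun_diff_def)
  qed
qed

lemma bij_betw_coord: "bij_betw (coord :: nat \<Rightarrow> 'd::finite) {..<CARD('d)} UNIV"
proof -
  have "\<exists>f. bij_betw f {..<CARD('d)} (UNIV :: 'd set)"
    by (rule finite_same_card_bij) auto
  then show ?thesis unfolding coord_def by (rule someI_ex)
qed

lemma sum_UNIV_coord: "(\<Sum>j\<in>UNIV. f j) = (\<Sum>i<CARD('d::finite). f (coord i :: 'd))"
  using sum.reindex_bij_betw[OF bij_betw_coord, of f] by simp

lemma inv_into_coord: "i < CARD('d::finite) \<Longrightarrow> inv_into {..<CARD('d)} (coord :: nat \<Rightarrow> 'd) (coord i) = i"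
  using bij_betw_inv_into_left[OF bij_betw_coord] by auto

lemma norm_of_fun_diff: "norm (of_fun u - of_fun w :: real ^ 'd::finite) = vnorm CARD('d) (u - w)"
proof -
  have "(norm (of_fun u - of_fun w :: real ^ 'd))\<^sup>2 = (\<Sum>i<CARD('d). (u i - w i)\<^sup>2)"
    unfolding norm_vec_power2 sum_UNIV_coord by (intro sum.cong) (auto simp: of_fun_def inv_into_coord)
  then show ?thesis by (simp add: vnorm_def real_sqrt_unique)
qed

lemma vnorm_to_fun_diff: "vnorm CARD('d::finite) (to_fun x - to_fun y) = norm (x - y :: real ^ 'd)"
proof -
  have "(norm (x - y :: real ^ 'd))\<^sup>2 = (\<Sum>i<CARD('d). (to_fun x i - to_fun y i)\<^sup>2)"
    unfolding norm_vec_power2 sum_UNIV_coord by (intro sum.cong) (auto simp: to_fun_def)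
  then show ?thesis by (simp add: vnorm_def real_sqrt_unique)
qed

lemma Ftilde_lipschitz:
  assumes "s-lipschitz_on UNIV \<sigma>" and "0 < s" and wf: "wf_net CARD('d::finite) Ls"
  shows "1-lipschitz_on UNIV (Ftilde \<sigma> s Ls :: real ^ 'd \<Rightarrow> real ^ 'd)"
proof (rule lipschitz_onI)
  fix x y :: "real ^ 'd"
  have "norm (Ftilde \<sigma> s Ls x - Ftilde \<sigma> s Ls y)
      = vnorm CARD('d) (net_apply \<sigma> s Ls (to_fun x) - net_apply \<sigma> s Ls (to_fun y))"
    unfolding Ftilde_def by (rule norm_of_fun_diff)
  also have "\<dots> \<le> vnorm CARD('d) (to_fun x - to_fun y)"
    using net_apply_lipschitz[OF assms(1,2)] wf unfolding wf_net_def by metis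
  also have "\<dots> = norm (x - y)" by (rule vnorm_to_fun_diff)
  finally show "dist (Ftilde \<sigma> s Ls x) (Ftilde \<sigma> s Ls y) \<le> 1 * dist x y" by (simp add: dist_norm)
qed simp

lemma sn_layer_differentiable:
  fixes g :: "'a::real_normed_vector \<Rightarrow> nat \<Rightarrow> real"
  assumes "\<forall>t. \<sigma> differentiable (at t)" and "\<And>j. (\<lambda>x. g x j) differentiable (at x0)"
  shows "(\<lambda>x. sn_layer \<sigma> s L (g x) i) differentiable (at x0)"
proof -
  obtain m k G b where L: "L = (m, k, G, b)" by (cases L)
  let ?z = "\<lambda>x. (\<Sum>j<k. G i j / (s * spec_norm m k G) * g x j) + b i"
  have "?z differentiable (at x0)"
    by (intro differentiable_add differentiable_sum ballI differentiable_mult differentiable_const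
        assms(2) finite_lessThan)
  then have "(\<sigma> \<circ> ?z) differentiable (at x0)" using assms(1) by (intro differentiable_chain_at) auto
  then show ?thesis by (cases "i < m") (simp_all add: L sn_layer_def o_def)
qed

lemma net_apply_differentiable:
  fixes g :: "'a::real_normed_vector \<Rightarrow> nat \<Rightarrow> real"
  assumes "\<forall>t. \<sigma> differentiable (at t)"
  shows "(\<And>j. (\<lambda>x. g x j) differentiable (at x0)) \<Longrightarrow> (\<lambda>x. net_apply \<sigma> s Ls (g x) i) differentiable (at x0)"
proof (induction Ls arbitrary: g)
  case (Cons L Ls)
  then show ?case
    using Cons.IH[of "\<lambda>x. sn_layer \<sigma> s L (g x)"] sn_layer_differentiable[OF assms Cons.prems] by simp
qed simp

lemma Ftilde_differentiable:
  assumes "\<forall>t. \<sigma> differentiable (at t)"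
  shows "(Ftilde \<sigma> s Ls :: real ^ 'd::finite \<Rightarrow> real ^ 'd) differentiable (at x0)"
proof -
  have "(\<lambda>x :: real ^ 'd. to_fun x j) differentiable (at x0)" for j
    by (cases "j < CARD('d)") (simp_all add: to_fun_def bounded_linear_imp_differentiable bounded_linear_vec_nth)
  then have net: "(\<lambda>x. net_apply \<sigma> s Ls (to_fun x) i) differentiable (at x0)" for i
    by (rule net_apply_differentiable[OF assms])
  show ?thesis
  proof (subst differentiable_componentwise_within, intro ballI)
    fix e :: "real ^ 'd"
    assume "e \<in> Basis"
    then obtain j where "e = axis j 1" by (auto simp: Basis_vec_def)
    then have "(\<lambda>x. Ftilde \<sigma> s Ls x \<bullet> e) = (\<lambda>x. net_apply \<sigma> s Ls (to_fun x) (inv_into {..<CARD('d)} coord j))"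
      by (simp add: fun_eq_iff inner_axis Ftilde_def of_fun_def)
    with net show "(\<lambda>x. Ftilde \<sigma> s Ls x \<bullet> e) differentiable (at x0)" by simp
  qed
qed

theorem theorem1:
  fixes \<theta> :: real and \<sigma> :: "real \<Rightarrow> real" and Ls :: "layer list"
    and \<gamma>c \<gamma>L :: real
  assumes "0 \<le> \<theta>" "\<theta> \<le> 1"
    and "\<forall>t. \<sigma> differentiable (at t)"
    and "bdd_above (range (\<lambda>t. \<bar>deriv \<sigma> t\<bar>))"
    and "(SUP t. \<bar>deriv \<sigma> t\<bar>) > 0"
    and "wf_net CARD('d::finite) Ls"
  shows "let s = (SUP t. \<bar>deriv \<sigma> t\<bar>);
             c = stab_inv \<theta> (1 - sigmoid \<gamma>c);
             r = max 0 (stab_inv \<theta> (1 - sigmoid \<gamma>L) - c);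
             F = (\<lambda>x :: real ^ 'd. c *\<^sub>R x + r *\<^sub>R Ftilde \<sigma> s Ls x)
         in \<forall>x. F differentiable (at x) \<and>
              (\<forall>F'. (F has_derivative F') (at x) \<longrightarrow>
                 (\<forall>\<mu>. is_eigenvalue (matrix F') \<mu> \<longrightarrow> cmod (stab \<theta> \<mu>) < 1))"
proof -
  define s where "s = (SUP t. \<bar>deriv \<sigma> t\<bar>)"
  define c where "c = stab_inv \<theta> (1 - sigmoid \<gamma>c)"
  define r where "r = max 0 (stab_inv \<theta> (1 - sigmoid \<gamma>L) - c)"
  have "s-lipschitz_on UNIV \<sigma>" unfolding s_def using assms(3,4) by (rule lipschitz_on_SUP_abs_deriv)
  then have lip: "1-lipschitz_on UNIV (Ftilde \<sigma> s Ls :: real ^ 'd \<Rightarrow> real ^ 'd)"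
    using assms(5,6) by (simp add: s_def Ftilde_lipschitz)
  have diff: "Ftilde \<sigma> s Ls differentiable (at x)" for x :: "real ^ 'd"
    using assms(3) by (rule Ftilde_differentiable)
  note c = stab_inv_bounds[OF assms(1,2) sigmoid_pos sigmoid_less_one, of \<gamma>c, folded c_def]
  note a = stab_inv_bounds[OF assms(1,2) sigmoid_pos sigmoid_less_one, of \<gamma>L]
  note ends = diameter_in_stability_region[OF c a, folded r_def]
  have "0 \<le> r" by (simp add: r_def)
  show ?thesis
    unfolding Let_def s_def[symmetric] c_def[symmetric] r_def[symmetric]
  proof (intro allI conjI impI)
    fix x :: "real ^ 'd" and F' \<mu>
    show "(\<lambda>x. c *\<^sub>R x + r *\<^sub>R Ftilde \<sigma> s Ls x) differentiable (at x)"
      using diff by (intro differentiable_add differentiable_scaleR differentiable_ident differentiable_const)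
    assume "((\<lambda>x. c *\<^sub>R x + r *\<^sub>R Ftilde \<sigma> s Ls x) has_derivative F') (at x)"
      and "is_eigenvalue (matrix F') \<mu>"
    then have "cmod (\<mu> - of_real c) \<le> r"
      using is_eigenvalue_derivative_dist_le[OF lip diff \<open>0 \<le> r\<close>] by simp
    then show "cmod (stab \<theta> \<mu>) < 1"
      using ends by (intro norm_stab_less_one disk_in_stability_region) auto
  qed
qed

end
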